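(* Let $\phi$ be a nonconstant rational inner function on $\mathbb{D}^2$ and let $\alpha\in\mathbb{T}$. Then the Clark measure $\sigma_\alpha$ of $\phi$ has no point masses, i.e. $\sigma_\alpha(\{\zeta\})=0$ for every $\zeta\in\mathbb{T}^2$.
   Context: $\mathbb{D}$ is the open unit disk and $\mathbb{T}$ the unit circle. A rational inner function (RIF) on $\mathbb{D}^2$ is a rational function $\phi$ that is holomorphic and bounded on $\mathbb{D}^2$ with $|\phi(\zeta)|=1$ for almost every $\zeta\in\mathbb{T}^2$. The Poisson kernel of $\mathbb{D}^2$ is $P_z(\zeta)=\frac{(1-|z_1|^2)(1-|z_2|^2)}{|\zeta_1-z_1|^2|\zeta_2-z_2|^2}$ for $z\in\mathbb{D}^2,\ \zeta\in\mathbb{T}^2$. For $\alpha\in\mathbb{T}$, the Clark measure $\sigma_\alpha$ of $\phi$ is the unique positive (finite) Borel measure on $\mathbb{T}^2$ such that $\frac{1-|\phi(z)|^2}{|\alpha-\phi(z)|^2}=\int_{\mathbb{T}^2}P_z(\zeta)\,d\sigma_\alpha(\zeta)$ for all $z\in\mathbb{D}^2$. *)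

theory Defs
  imports "HOL-Analysis.Analysis"
begin

definition bidisk :: "(complex \<times> complex) set" where
  "bidisk = {z. norm (fst z) < 1 \<and> norm (snd z) < 1}"

definition torus2 :: "(complex \<times> complex) set" where
  "torus2 = {z. norm (fst z) = 1 \<and> norm (snd z) = 1}"

text \<open>Polynomial functions in two complex variables, written as explicit finite
  sums of monomials (multivariate polynomials are not in the library).\<close>

definition bipoly :: "(complex \<times> complex \<Rightarrow> complex) \<Rightarrow> bool" where
  "bipoly p \<longleftrightarrow> (\<exists>n::nat. \<exists>a :: nat \<Rightarrow> nat \<Rightarrow> complex.
      \<forall>z. p z = (\<Sum>i\<le>n. \<Sum>j\<le>n. a i j * fst z ^ i * snd z ^ j))"

text \<open>It is rational: phi = p/q off the zero set of a polynomial q which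
  does not vanish identically on the bidisk; it is holomorphic (a continuous
  function agreeing with p/q off a proper analytic subset is holomorphic, by
  Riemann's extension theorem; conversely holomorphic functions are continuous)
  and bounded on the bidisk; and the rational function p/q has modulus one at
  almost every point of the torus (w.r.t. arc-length measure, parametrised by
  angles (s,t) \<mapsto> (cis s, cis t)).\<close>

definition rational_inner :: "(complex \<times> complex \<Rightarrow> complex) \<Rightarrow> bool" where
  "rational_inner \<phi> \<longleftrightarrow>
     (\<exists>p q. bipoly p \<and> bipoly q \<and> (\<exists>z\<in>bidisk. q z \<noteq> 0) \<and>
        (\<forall>z\<in>bidisk. q z \<noteq> 0 \<longrightarrow> \<phi> z = p z / q z) \<and>
        continuous_on bidisk \<phi> \<and>
        (\<exists>B. \<forall>z\<in>bidisk. norm (\<phi> z) \<le> B) \<and>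
        (AE x in (lborel :: (real \<times> real) measure).
           q (cis (fst x), cis (snd x)) \<noteq> 0 \<and>
           norm (p (cis (fst x), cis (snd x)) / q (cis (fst x), cis (snd x))) = 1))"

definition poisson2 :: "complex \<times> complex \<Rightarrow> complex \<times> complex \<Rightarrow> real" where
  "poisson2 z \<zeta> =
     ((1 - (norm (fst z))\<^sup>2) * (1 - (norm (snd z))\<^sup>2)) /
     ((norm (fst \<zeta> - fst z))\<^sup>2 * (norm (snd \<zeta> - snd z))\<^sup>2)"

definition is_clark_measure ::
  "(complex \<times> complex \<Rightarrow> complex) \<Rightarrow> complex \<Rightarrow> (complex \<times> complex) measure \<Rightarrow> bool" where
  "is_clark_measure \<phi> \<alpha> \<sigma> \<longleftrightarrow>
     sets \<sigma> = sets borel \<and> finite_measure \<sigma> \<and>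
     emeasure \<sigma> (UNIV - torus2) = 0 \<and>
     (\<forall>z\<in>bidisk.
        ennreal ((1 - (norm (\<phi> z))\<^sup>2) / (norm (\<alpha> - \<phi> z))\<^sup>2)
        = (\<integral>\<^sup>+ \<zeta>. ennreal (poisson2 z \<zeta>) \<partial>\<sigma>))"

end

theory Submission
  imports Defs "HOL-Complex_Analysis.Complex_Analysis"
begin

text \<open>An atom of \<open>\<sigma>\<close> at \<open>\<zeta>\<close> makes the left side \<open>(1 - |\<phi>|\<^sup>2) / |\<alpha> - \<phi>|\<^sup>2\<close> of the Clark
  representation positive on the bidisk, so \<open>\<phi>\<close> omits \<open>\<alpha>\<close> and the Poisson integral of \<open>\<sigma>\<close> is the real part of
  \<open>h = (\<alpha> + \<phi>) / (\<alpha> - \<phi>)\<close>. Being rational and continuous, \<open>\<phi>\<close>, and with it \<open>h\<close>, is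
  holomorphic in each variable separately off finitely many slices. Integrating \<open>Re h\<close> over
  tori of circles that avoid these slices shows that the mixed Cauchy integrals
  \<open>\<integral> \<xi>\<^sub>1 / (\<xi>\<^sub>1 - c\<^sub>1)\<^sup>2 \<cdot> cnj (\<xi>\<^sub>2 / (\<xi>\<^sub>2 - c\<^sub>2)\<^sup>2) d\<sigma>(\<xi>)\<close> vanish for every \<open>c\<close> in the
  bidisk. For \<open>c = r\<zeta>\<close> these integrands, scaled by \<open>(1 - r)\<^sup>4\<close>, are bounded by \<open>1\<close> and tend
  to \<open>cnj \<zeta>\<^sub>1 \<cdot> \<zeta>\<^sub>2\<close> at \<open>\<zeta>\<close> and to \<open>0\<close> elsewhere on the torus as \<open>r \<rightarrow> 1\<close>; dominated
  convergence gives \<open>\<sigma>{\<zeta>} = 0\<close>.\<close>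

section \<open>Fourier coefficients along circles\<close>

definition e2pi :: "real \<Rightarrow> complex" where
  "e2pi t = exp (2 * of_real pi * \<i> * of_real t)"

lemma norm_e2pi [simp]: "norm (e2pi t) = 1"
  unfolding e2pi_def by simp

lemma e2pi_nonzero [simp]: "e2pi t \<noteq> 0"
  unfolding e2pi_def by simp

lemma cnj_e2pi: "cnj (e2pi t) = inverse (e2pi t)"
  unfolding e2pi_def by (simp add: exp_cnj exp_minus[symmetric])

lemma continuous_on_e2pi [continuous_intros]:
  "continuous_on S f \<Longrightarrow> continuous_on S (\<lambda>x. e2pi (f x))"
  unfolding e2pi_def by (intro continuous_intros)

lemma circlepath_e2pi: "circlepath c \<rho> t = c + of_real \<rho> * e2pi t"
  by (simp add: circlepath e2pi_def)

lemma norm_circlepath_diff [simp]: "0 \<le> \<rho> \<Longrightarrow> norm (circlepath c \<rho> t - c) = \<rho>"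
  by (simp add: circlepath_e2pi norm_mult)

lemma circlepath_in_ball:
  assumes "0 \<le> \<rho>" "\<rho> < r"
  shows "circlepath c \<rho> t \<in> ball c r"
  using assms by (simp add: dist_norm norm_minus_commute[of c])

lemma continuous_on_circlepath_comp [continuous_intros]:
  "continuous_on S f \<Longrightarrow> continuous_on S (\<lambda>x. circlepath c \<rho> (f x))"
  unfolding circlepath_e2pi by (intro continuous_intros)

lemma norm_circlepath_le: "0 \<le> \<rho> \<Longrightarrow> norm (circlepath c \<rho> t) \<le> norm c + \<rho>"
  using norm_triangle_ineq[of c "of_real \<rho> * e2pi t"] by (simp add: circlepath_e2pi norm_mult)

lemma norm_circlepath_less_1: "norm c + \<rho> < 1 \<Longrightarrow> 0 \<le> \<rho> \<Longrightarrow> norm (circlepath c \<rho> t) < 1"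
  using norm_circlepath_le[of \<rho> c t] by simp

lemma has_integral_circlepath_times_e2pi:
  assumes hol: "g holomorphic_on ball c r" and "0 < \<rho>" "\<rho> < r"
  shows "((\<lambda>t. g (circlepath c \<rho> t) * e2pi t) has_integral 0) {0..1}"
proof -
  define K where "K = 2 * pi * \<i> * complex_of_real \<rho>"
  have "K \<noteq> 0"
    using \<open>0 < \<rho>\<close> by (simp add: K_def)
  have "path_image (circlepath c \<rho>) \<subseteq> ball c r"
    using assms by (auto simp: path_image_circlepath dist_norm norm_minus_commute)
  then have "(g has_contour_integral 0) (circlepath c \<rho>)"
    by (intro Cauchy_theorem_convex_simple[OF hol convex_ball valid_path_circlepath]) auto
  then have "((\<lambda>t. K * (g (circlepath c \<rho> t) * e2pi t)) has_integral 0) {0..1}"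
    by (simp add: has_contour_integral vector_derivative_circlepath circlepath_e2pi e2pi_def
        K_def mult_ac)
  then show ?thesis
    unfolding has_integral_mult_right_iff[OF \<open>K \<noteq> 0\<close>] by simp
qed

lemma has_integral_circlepath_times_cnj_e2pi:
  assumes hol: "g holomorphic_on ball c r" and "0 < \<rho>" "\<rho> < r"
  shows "((\<lambda>t. g (circlepath c \<rho> t) * cnj (e2pi t)) has_integral (\<rho> * deriv g c)) {0..1}"
proof -
  define K where "K = 2 * pi * \<i> / complex_of_real \<rho>"
  have "K \<noteq> 0"
    using \<open>0 < \<rho>\<close> by (simp add: K_def)
  have "cball c \<rho> \<subseteq> ball c r"
    using assms by auto
  then have "continuous_on (cball c \<rho>) g" "g holomorphic_on ball c \<rho>"
    using hol ball_subset_cball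
    by (blast intro: holomorphic_on_imp_continuous_on holomorphic_on_subset)+
  then have "((\<lambda>w. g w / (w - c) ^ Suc 1) has_contour_integral (2 * pi * \<i> * deriv g c))
      (circlepath c \<rho>)"
    using Cauchy_has_contour_integral_higher_derivative_circlepath[of c \<rho> g c 1] \<open>0 < \<rho>\<close>
    by simp
  then have "((\<lambda>t. K * (g (circlepath c \<rho> t) * cnj (e2pi t))) has_integral K * (\<rho> * deriv g c))
      {0..1}"
    using \<open>0 < \<rho>\<close>
    by (simp add: has_contour_integral vector_derivative_circlepath cnj_e2pi K_def)
       (simp add: circlepath_e2pi e2pi_def field_simps power2_eq_square)
  then show ?thesis
    unfolding has_integral_mult_right_iff[OF \<open>K \<noteq> 0\<close>] using \<open>K \<noteq> 0\<close> by simp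
qed

lemma double_integral_Re_times_e2pi_eq_0:
  fixes G :: "real \<Rightarrow> real \<Rightarrow> complex"
  assumes cont: "continuous_on (cbox (0, 0) (1, 1)) (\<lambda>(s, t). G s t)"
    and rows: "\<And>s. s \<in> {0..1} \<Longrightarrow> integral {0..1} (\<lambda>t. G s t * e2pi t) = 0"
    and cols: "\<And>t. t \<in> {0..1} \<Longrightarrow> integral {0..1} (\<lambda>s. G s t * e2pi s) = 0"
  shows "integral {0..1} (\<lambda>s. integral {0..1} (\<lambda>t. of_real (Re (G s t)) * cnj (e2pi s) * e2pi t))
    = 0"
proof -
  have row_cont: "continuous_on {0..1} (G s)" if "s \<in> {0..1}" for s
  proof -
    have "continuous_on {0..1} ((\<lambda>(s, t). G s t) \<circ> (\<lambda>t. (s, t)))"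
      by (rule continuous_on_compose[OF _ continuous_on_subset[OF cont]])
        (use that in \<open>auto intro!: continuous_intros simp: cbox_Pair_eq\<close>)
    then show ?thesis
      by (simp add: o_def)
  qed
  have row_Re: "integral {0..1} (\<lambda>t. of_real (Re (G s t)) * cnj (e2pi s) * e2pi t)
      = cnj (integral {0..1} (\<lambda>t. G s t * e2pi s * cnj (e2pi t))) / 2" if "s \<in> {0..1}" for s
  proof -
    have int: "(\<lambda>t. G s t * cnj (e2pi s) * e2pi t) integrable_on {0..1}"
      "(\<lambda>t. cnj (G s t) * cnj (e2pi s) * e2pi t) integrable_on {0..1}"
      by (intro integrable_continuous_interval continuous_intros row_cont[OF that])+
    have "integral {0..1} (\<lambda>t. G s t * cnj (e2pi s) * e2pi t)
        = cnj (e2pi s) * integral {0..1} (\<lambda>t. G s t * e2pi t)"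
      by (simp add: mult_ac flip: integral_mult_right)
    then have zero: "integral {0..1} (\<lambda>t. G s t * cnj (e2pi s) * e2pi t) = 0"
      using rows[OF that] by simp
    have "integral {0..1} (\<lambda>t. of_real (Re (G s t)) * cnj (e2pi s) * e2pi t)
        = integral {0..1} (\<lambda>t. (G s t * cnj (e2pi s) * e2pi t + cnj (G s t) * cnj (e2pi s) * e2pi t) / 2)"
      by (intro integral_cong) (simp add: mult.assoc distrib_right[symmetric] complex_add_cnj)
    also have "\<dots> = integral {0..1} (\<lambda>t. cnj (G s t) * cnj (e2pi s) * e2pi t) / 2"
      using int zero by (simp add: integral_add)
    finally show ?thesis
      by (simp add: integral_cnj)
  qed
  have "continuous_on (cbox (0, 0) (1, 1)) (\<lambda>(s, t). G s t * e2pi s * cnj (e2pi t))"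
    using cont by (simp add: case_prod_unfold) (intro continuous_intros)
  from integral_swap_continuous[OF this]
  have "integral {0..1} (\<lambda>s. integral {0..1} (\<lambda>t. G s t * e2pi s * cnj (e2pi t)))
      = integral {0..1} (\<lambda>t. integral {0..1} (\<lambda>s. G s t * e2pi s * cnj (e2pi t)))"
    by (simp only: cbox_interval)
  also have "\<dots> = integral {0..1} (\<lambda>t::real. 0)"
    by (intro Henstock_Kurzweil_Integration.integral_cong) (simp add: cols)
  finally have swapped: "integral {0..1} (\<lambda>s. integral {0..1} (\<lambda>t. G s t * e2pi s * cnj (e2pi t))) = 0"
    by simp
  have "integral {0..1} (\<lambda>s. integral {0..1} (\<lambda>t. of_real (Re (G s t)) * cnj (e2pi s) * e2pi t))
      = integral {0..1} (\<lambda>s. cnj (integral {0..1} (\<lambda>t. G s t * e2pi s * cnj (e2pi t))) / 2)"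
    by (intro Henstock_Kurzweil_Integration.integral_cong) (simp add: row_Re)
  also have "\<dots> = cnj (integral {0..1} (\<lambda>s. integral {0..1} (\<lambda>t. G s t * e2pi s * cnj (e2pi t)))) / 2"
    by (simp add: integral_cnj)
  finally show ?thesis
    by (simp add: swapped)
qed

section \<open>The Poisson kernel of the disc\<close>

definition poisson_kernel :: "complex \<Rightarrow> complex \<Rightarrow> real" where
  "poisson_kernel w \<zeta> = (1 - (norm w)\<^sup>2) / (norm (\<zeta> - w))\<^sup>2"

lemma poisson2_eq_poisson_kernel:
  "poisson2 z \<zeta> = poisson_kernel (fst z) (fst \<zeta>) * poisson_kernel (snd z) (snd \<zeta>)"
  by (simp add: poisson2_def poisson_kernel_def)

lemma poisson_kernel_eq_Re:
  assumes "norm \<zeta> = 1" "w \<noteq> \<zeta>"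
  shows "poisson_kernel w \<zeta> = Re ((\<zeta> + w) / (\<zeta> - w))"
proof -
  have "(Re \<zeta>)\<^sup>2 + (Im \<zeta>)\<^sup>2 = 1"
    using assms(1) by (simp add: cmod_def)
  moreover have "(Re \<zeta> - Re w)\<^sup>2 + (Im \<zeta> - Im w)\<^sup>2 \<noteq> 0"
    using assms(2) by (metis cmod_power2 minus_complex.sel right_minus_eq zero_eq_power2 norm_eq_zero)
  ultimately show ?thesis
    unfolding poisson_kernel_def
    by (simp only: cmod_power2 Re_divide, simp add: field_simps)
       (simp add: power2_eq_square algebra_simps)
qed

lemma poisson_kernel_pos:
  assumes "norm w < 1" "norm \<zeta> = 1"
  shows "0 < poisson_kernel w \<zeta>"
proof -
  have "w \<noteq> \<zeta>" "(norm w)\<^sup>2 < 1"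
    using assms by (auto simp: power_less_one_iff)
  then show ?thesis
    unfolding poisson_kernel_def by (intro divide_pos_pos) auto
qed

lemma poisson_kernel_nonneg: "norm w \<le> 1 \<Longrightarrow> 0 \<le> poisson_kernel w \<zeta>"
  unfolding poisson_kernel_def by (intro divide_nonneg_nonneg) (auto simp: power_le_one)

lemma poisson_kernel_le:
  assumes "norm \<zeta> = 1" "norm w \<le> a" "a < 1"
  shows "poisson_kernel w \<zeta> \<le> 1 / (1 - a)\<^sup>2"
proof -
  have "1 - a \<le> norm (\<zeta> - w)"
    using assms norm_triangle_ineq2[of \<zeta> w] by simp
  then have "(1 - a)\<^sup>2 \<le> (norm (\<zeta> - w))\<^sup>2"
    using assms by (intro power_mono) auto
  moreover have "1 - (norm w)\<^sup>2 \<le> 1" "0 < (1 - a)\<^sup>2"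
    using assms by auto
  ultimately show ?thesis
    unfolding poisson_kernel_def by (intro frac_le) auto
qed

lemma continuous_on_poisson_kernel [continuous_intros]:
  assumes "continuous_on S f" "\<And>x. x \<in> S \<Longrightarrow> f x \<noteq> \<zeta>"
  shows "continuous_on S (\<lambda>x. poisson_kernel (f x) \<zeta>)"
  unfolding poisson_kernel_def using assms by (intro continuous_intros) auto

lemma borel_measurable_poisson_kernel [measurable]:
  "f \<in> borel_measurable M \<Longrightarrow> g \<in> borel_measurable M \<Longrightarrow>
    (\<lambda>x. poisson_kernel (f x) (g x)) \<in> borel_measurable M"
  unfolding poisson_kernel_def
  by (intro borel_measurable_divide borel_measurable_diff borel_measurable_power
      borel_measurable_norm borel_measurable_const) auto

lemma poisson2_nonneg: "z \<in> bidisk \<Longrightarrow> 0 \<le> poisson2 z \<zeta>"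
  unfolding poisson2_eq_poisson_kernel bidisk_def
  by (intro mult_nonneg_nonneg poisson_kernel_nonneg) auto

lemma poisson2_le:
  assumes "\<zeta> \<in> torus2" "norm (fst z) \<le> a" "a < 1" "norm (snd z) \<le> b" "b < 1"
  shows "poisson2 z \<zeta> \<le> 1 / (1 - a)\<^sup>2 * (1 / (1 - b)\<^sup>2)"
  unfolding poisson2_eq_poisson_kernel using assms
  by (intro mult_mono poisson_kernel_le poisson_kernel_nonneg) (auto simp: torus2_def)

text \<open>The Poisson kernel is the real part of \<open>w \<mapsto> (\<zeta> + w) / (\<zeta> - w)\<close>, whose derivative at
  \<open>c\<close> is \<open>2\<zeta> / (\<zeta> - c)\<^sup>2\<close>; the conjugate part contributes nothing to this coefficient.\<close>

lemma has_integral_poisson_kernel_circlepath: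
  assumes \<zeta>: "norm \<zeta> = 1" and c: "norm c + \<rho> < 1" and "0 < \<rho>"
  shows "((\<lambda>t. of_real (poisson_kernel (circlepath c \<rho> t) \<zeta>) * cnj (e2pi t))
           has_integral (\<rho> * \<zeta> / (\<zeta> - c)\<^sup>2)) {0..1}"
proof -
  define g where "g w = (\<zeta> + w) / (\<zeta> - w)" for w
  define r where "r = 1 - norm c"
  have near: "w \<noteq> \<zeta>" if "w \<in> ball c r" for w
    using that \<zeta> norm_triangle_ineq2[of w c] by (auto simp: r_def dist_norm norm_minus_commute)
  have hol: "g holomorphic_on ball c r"
    unfolding g_def using near by (intro holomorphic_intros) auto
  have "\<rho> < r" "c \<in> ball c r"
    using c \<open>0 < \<rho>\<close> by (auto simp: r_def)
  then have "(g has_field_derivative (2 * \<zeta> / (\<zeta> - c)\<^sup>2)) (at c)"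
    unfolding g_def using near[OF \<open>c \<in> ball c r\<close>]
    by (auto intro!: derivative_eq_intros simp: field_simps power2_eq_square)
  then have "((\<lambda>t. g (circlepath c \<rho> t) * cnj (e2pi t)) has_integral (\<rho> * (2 * \<zeta> / (\<zeta> - c)\<^sup>2)))
      {0..1}"
    using has_integral_circlepath_times_cnj_e2pi[OF hol \<open>0 < \<rho>\<close> \<open>\<rho> < r\<close>]
    by (simp add: DERIV_imp_deriv)
  moreover have "((\<lambda>t. cnj (g (circlepath c \<rho> t)) * cnj (e2pi t)) has_integral 0) {0..1}"
    using has_integral_circlepath_times_e2pi[OF hol \<open>0 < \<rho>\<close> \<open>\<rho> < r\<close>]
    by (subst has_integral_cnj[symmetric]) (simp add: o_def)
  ultimately have "((\<lambda>t. (g (circlepath c \<rho> t) * cnj (e2pi t)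
      + cnj (g (circlepath c \<rho> t)) * cnj (e2pi t)) / 2)
      has_integral (\<rho> * (2 * \<zeta> / (\<zeta> - c)\<^sup>2) + 0) / 2) {0..1}"
    by (intro has_integral_divide has_integral_add)
  moreover have "(g (circlepath c \<rho> t) * cnj (e2pi t) + cnj (g (circlepath c \<rho> t)) * cnj (e2pi t)) / 2
      = of_real (poisson_kernel (circlepath c \<rho> t) \<zeta>) * cnj (e2pi t)" for t
  proof -
    have "circlepath c \<rho> t \<noteq> \<zeta>"
      using near circlepath_in_ball \<open>0 < \<rho>\<close> \<open>\<rho> < r\<close> by simp
    then have "of_real (poisson_kernel (circlepath c \<rho> t) \<zeta>) = of_real (Re (g (circlepath c \<rho> t)))"
      by (simp add: poisson_kernel_eq_Re[OF \<zeta>] g_def)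
    also have "\<dots> = (g (circlepath c \<rho> t) + cnj (g (circlepath c \<rho> t))) / 2"
      by (simp only: complex_add_cnj) simp
    finally show ?thesis
      by (simp add: distrib_right[symmetric])
  qed
  ultimately show ?thesis
    by simp
qed

section \<open>Poisson integrals of measures on the torus\<close>

lemma torus2_sets [measurable]: "torus2 \<in> sets borel"
  unfolding torus2_def by (intro borel_closed closed_Collect_conj closed_Collect_eq continuous_intros)

lemma set_integral_integral_swap_bounded:
  fixes Q :: "'a::euclidean_space \<Rightarrow> 'b \<Rightarrow> 'c::{banach, second_countable_topology}"
  assumes "finite_measure M" and B: "B \<in> sets lborel" "emeasure lborel B < \<infinity>"
    and Q: "(\<lambda>p. Q (fst p) (snd p)) \<in> borel_measurable (lborel \<Otimes>\<^sub>M M)"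
    and bound: "\<And>x y. norm (Q x y) \<le> K"
  shows "(LINT x:B|lborel. (\<integral>y. Q x y \<partial>M)) = (\<integral>y. (LINT x:B|lborel. Q x y) \<partial>M)"
proof -
  interpret M: finite_measure M by fact
  interpret P: pair_sigma_finite lborel M ..
  have "integrable (lborel \<Otimes>\<^sub>M M) (\<lambda>(x, y). indicator B x *\<^sub>R Q x y)"
  proof (rule integrableI_bounded_set[where A="B \<times> space M" and B=K])
    show "B \<times> space M \<in> sets (lborel \<Otimes>\<^sub>M M)"
      using B by auto
    show "(\<lambda>(x, y). indicator B x *\<^sub>R Q x y) \<in> borel_measurable (lborel \<Otimes>\<^sub>M M)"
      using B Q unfolding case_prod_unfold by measurable
    have "emeasure (lborel \<Otimes>\<^sub>M M) (B \<times> space M) = emeasure lborel B * emeasure M (space M)"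
      using B by (intro M.emeasure_pair_measure_Times) auto
    moreover have "emeasure M (space M) < \<infinity>"
      using M.emeasure_finite by (auto simp: less_top[symmetric])
    ultimately show "emeasure (lborel \<Otimes>\<^sub>M M) (B \<times> space M) < \<infinity>"
      using B by (simp add: ennreal_mult_less_top)
    show "AE p in lborel \<Otimes>\<^sub>M M. p \<in> B \<times> space M \<longrightarrow>
        norm (case p of (x, y) \<Rightarrow> indicator B x *\<^sub>R Q x y) \<le> K"
      using bound by (auto simp: indicator_def)
    show "AE p in lborel \<Otimes>\<^sub>M M. p \<notin> B \<times> space M \<longrightarrow>
        (case p of (x, y) \<Rightarrow> indicator B x *\<^sub>R Q x y) = 0"
      by (intro AE_I2) (auto simp: space_pair_measure indicator_def)
  qed
  from P.Fubini_integral[OF this] show ?thesis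
    by (simp add: set_lebesgue_integral_def)
qed

text \<open>Restricting to \<open>torus2\<close> keeps the integrand bounded; this changes nothing for measures
  concentrated on the torus, such as Clark measures.\<close>

definition poisson_integral :: "(complex \<times> complex) measure \<Rightarrow> complex \<times> complex \<Rightarrow> real" where
  "poisson_integral \<sigma> z = (\<integral>\<zeta>. indicator torus2 \<zeta> * poisson2 z \<zeta> \<partial>\<sigma>)"

lemma poisson_integral_nonneg: "z \<in> bidisk \<Longrightarrow> 0 \<le> poisson_integral \<sigma> z"
  unfolding poisson_integral_def
  by (intro Bochner_Integration.integral_nonneg mult_nonneg_nonneg poisson2_nonneg) auto

lemma nn_integral_poisson2_eq_poisson_integral:
  fixes \<sigma> :: "(complex \<times> complex) measure"
  assumes sets: "sets \<sigma> = sets borel" and "finite_measure \<sigma>" and null: "emeasure \<sigma> (UNIV - torus2) = 0"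
    and z: "z \<in> bidisk"
  shows "(\<integral>\<^sup>+ \<zeta>. ennreal (poisson2 z \<zeta>) \<partial>\<sigma>) = ennreal (poisson_integral \<sigma> z)"
proof -
  interpret finite_measure \<sigma> by fact
  define g where "g \<zeta> = indicator torus2 \<zeta> * poisson2 z \<zeta>" for \<zeta>
  have g: "0 \<le> g \<zeta> \<and> g \<zeta> \<le> 1 / (1 - norm (fst z))\<^sup>2 * (1 / (1 - norm (snd z))\<^sup>2)" for \<zeta>
    using z poisson2_nonneg[OF z] poisson2_le[of \<zeta> z "norm (fst z)" "norm (snd z)"]
    by (auto simp: g_def bidisk_def indicator_def)
  have "g \<in> borel_measurable \<sigma>"
    unfolding g_def poisson2_eq_poisson_kernel measurable_cong_sets[OF sets refl]
    by (intro borel_measurable_times borel_measurable_poisson_kernel borel_measurable_const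
        measurable_compose[OF _ borel_measurable_indicator[OF torus2_sets]]
        borel_measurable_continuous_onI continuous_intros)
  then have "integrable \<sigma> g"
    using g by (intro integrable_const_bound[where B = "1 / (1 - norm (fst z))\<^sup>2 * (1 / (1 - norm (snd z))\<^sup>2)"])
      auto
  have "UNIV - torus2 \<in> null_sets \<sigma>"
    using null sets by (intro null_setsI) auto
  then have "AE \<zeta> in \<sigma>. \<zeta> \<in> torus2"
    by (rule AE_I') (auto simp: sets_eq_imp_space_eq[OF sets])
  then have "(\<integral>\<^sup>+ \<zeta>. ennreal (poisson2 z \<zeta>) \<partial>\<sigma>) = (\<integral>\<^sup>+ \<zeta>. ennreal (g \<zeta>) \<partial>\<sigma>)"
    by (intro nn_integral_cong_AE) (auto simp: g_def)
  also have "\<dots> = ennreal (integral\<^sup>L \<sigma> g)"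
    using g by (intro nn_integral_eq_integral[OF \<open>integrable \<sigma> g\<close>]) auto
  also have "\<dots> = ennreal (poisson_integral \<sigma> z)"
    by (simp add: poisson_integral_def g_def[abs_def])
  finally show ?thesis .
qed

lemma set_integral_cbox_poisson2_times_e2pi:
  assumes c1: "norm c1 + \<rho> < 1" and c2: "norm c2 + \<rho> < 1" and "0 < \<rho>"
  shows "(LINT x:cbox (0, 0) (1, 1)|lborel. of_real (indicator torus2 \<zeta>
      * poisson2 (circlepath c1 \<rho> (fst x), circlepath c2 \<rho> (snd x)) \<zeta>) * (cnj (e2pi (fst x)) * e2pi (snd x)))
    = indicator torus2 \<zeta> *\<^sub>R (\<rho> * fst \<zeta> / (fst \<zeta> - c1)\<^sup>2 * cnj (\<rho> * snd \<zeta> / (snd \<zeta> - c2)\<^sup>2))"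
proof (cases "\<zeta> \<in> torus2")
  case True
  then have \<zeta>: "norm (fst \<zeta>) = 1" "norm (snd \<zeta>) = 1"
    by (auto simp: torus2_def)
  define f1 where "f1 s = of_real (poisson_kernel (circlepath c1 \<rho> s) (fst \<zeta>)) * cnj (e2pi s)" for s
  define f2 where "f2 t = of_real (poisson_kernel (circlepath c2 \<rho> t) (snd \<zeta>)) * e2pi t" for t
  have f1: "(f1 has_integral (\<rho> * fst \<zeta> / (fst \<zeta> - c1)\<^sup>2)) {0..1}"
    unfolding f1_def by (rule has_integral_poisson_kernel_circlepath[OF \<zeta>(1) c1 \<open>0 < \<rho>\<close>])
  have f2: "(f2 has_integral cnj (\<rho> * snd \<zeta> / (snd \<zeta> - c2)\<^sup>2)) {0..1}"
    unfolding f2_def using has_integral_poisson_kernel_circlepath[OF \<zeta>(2) c2 \<open>0 < \<rho>\<close>]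
    by (subst has_integral_cnj[symmetric]) (simp add: o_def)
  have "circlepath c1 \<rho> s \<noteq> fst \<zeta>" "circlepath c2 \<rho> s \<noteq> snd \<zeta>" for s
    using norm_circlepath_less_1[OF c1, of s] norm_circlepath_less_1[OF c2, of s] \<zeta> \<open>0 < \<rho>\<close>
    by auto
  then have cont: "continuous_on (cbox (0, 0) (1, 1)) (\<lambda>x. f1 (fst x) * f2 (snd x))"
    unfolding f1_def f2_def by (intro continuous_intros) auto
  then have "(LINT x:cbox (0, 0) (1, 1)|lborel. f1 (fst x) * f2 (snd x))
      = integral (cbox (0, 0) (1, 1)) (\<lambda>x. f1 (fst x) * f2 (snd x))"
    by (intro set_borel_integral_eq_integral(2) borel_integrable_compact[OF compact_cbox,
        folded set_integrable_def])
  also have "\<dots> = integral {0..1} f1 * integral {0..1} f2"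
    using integral_prod_continuous[OF cont] by (simp add: cbox_interval)
  finally have prod: "(LINT x:cbox (0, 0) (1, 1)|lborel. f1 (fst x) * f2 (snd x))
      = integral {0..1} f1 * integral {0..1} f2" .
  have "of_real (indicator torus2 \<zeta> * poisson2 (circlepath c1 \<rho> (fst x), circlepath c2 \<rho> (snd x)) \<zeta>)
      * (cnj (e2pi (fst x)) * e2pi (snd x)) = f1 (fst x) * f2 (snd x)" for x
    using True by (simp add: poisson2_eq_poisson_kernel f1_def f2_def mult_ac)
  then show ?thesis
    using prod f1 f2 True by (simp add: integral_unique)
qed (simp add: set_lebesgue_integral_def)

lemma borel_measurable_poisson2_circlepaths:
  fixes \<sigma> :: "(complex \<times> complex) measure"
  assumes "sets \<sigma> = sets borel"
  shows "(\<lambda>p. of_real (indicator torus2 (snd p)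
      * poisson2 (circlepath c1 \<rho> (fst (fst p)), circlepath c2 \<rho> (snd (fst p))) (snd p))
      * (cnj (e2pi (fst (fst p))) * e2pi (snd (fst p)))) \<in> borel_measurable (lborel \<Otimes>\<^sub>M \<sigma>)"
proof -
  have "sets (lborel \<Otimes>\<^sub>M \<sigma>) = sets (borel \<Otimes>\<^sub>M borel)"
    by (rule sets_pair_measure_cong[OF sets_lborel assms])
  also have "\<dots> = sets (borel :: ((real \<times> real) \<times> (complex \<times> complex)) measure)"
    by (rule arg_cong[where f = sets, OF borel_prod])
  finally have S: "sets (lborel \<Otimes>\<^sub>M \<sigma>) = sets (borel :: ((real \<times> real) \<times> (complex \<times> complex)) measure)" .
  show ?thesis
    unfolding measurable_cong_sets[OF S refl] poisson2_eq_poisson_kernel prod.sel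
    by (intro borel_measurable_times measurable_compose[OF _ borel_measurable_of_real]
        borel_measurable_poisson_kernel measurable_compose[OF _ borel_measurable_indicator[OF torus2_sets]]
        borel_measurable_continuous_onI continuous_intros)
qed

lemma double_integral_poisson_integral_times_e2pi:
  fixes \<sigma> :: "(complex \<times> complex) measure"
  assumes sets: "sets \<sigma> = sets borel" and fin: "finite_measure \<sigma>"
    and c1: "norm c1 + \<rho> < 1" and c2: "norm c2 + \<rho> < 1" and "0 < \<rho>"
    and cont: "continuous_on (cbox (0, 0) (1, 1))
      (\<lambda>x. poisson_integral \<sigma> (circlepath c1 \<rho> (fst x), circlepath c2 \<rho> (snd x)))"
  shows "integral {0..1} (\<lambda>s. integral {0..1} (\<lambda>t.
      of_real (poisson_integral \<sigma> (circlepath c1 \<rho> s, circlepath c2 \<rho> t)) * cnj (e2pi s) * e2pi t))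
    = (\<integral>\<zeta>. indicator torus2 \<zeta> *\<^sub>R (\<rho> * fst \<zeta> / (fst \<zeta> - c1)\<^sup>2 * cnj (\<rho> * snd \<zeta> / (snd \<zeta> - c2)\<^sup>2)) \<partial>\<sigma>)"
proof -
  define B where "B = cbox (0::real, 0::real) (1, 1)"
  define \<gamma> where "\<gamma> x = (circlepath c1 \<rho> (fst x), circlepath c2 \<rho> (snd x))" for x :: "real \<times> real"
  define W where "W x = of_real (poisson_integral \<sigma> (\<gamma> x)) * (cnj (e2pi (fst x)) * e2pi (snd x))" for x
  define Q where "Q x \<zeta> = of_real (indicator torus2 \<zeta> * poisson2 (\<gamma> x) \<zeta>) * (cnj (e2pi (fst x)) * e2pi (snd x))"
    for x :: "real \<times> real" and \<zeta> :: "complex \<times> complex"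
  have contW: "continuous_on B W"
    unfolding W_def B_def \<gamma>_def using cont by (intro continuous_intros)
  have "norm (Q x \<zeta>) \<le> 1 / (1 - (norm c1 + \<rho>))\<^sup>2 * (1 / (1 - (norm c2 + \<rho>))\<^sup>2)" for x \<zeta>
    using poisson2_nonneg[of "\<gamma> x" \<zeta>] poisson2_le[of \<zeta> "\<gamma> x" "norm c1 + \<rho>" "norm c2 + \<rho>"]
      c1 c2 \<open>0 < \<rho>\<close> norm_circlepath_le norm_circlepath_less_1
    by (auto simp: Q_def \<gamma>_def bidisk_def norm_mult indicator_def)
  then have "(LINT x:B|lborel. (\<integral>\<zeta>. Q x \<zeta> \<partial>\<sigma>)) = (\<integral>\<zeta>. (LINT x:B|lborel. Q x \<zeta>) \<partial>\<sigma>)"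
    unfolding B_def using borel_measurable_poisson2_circlepaths[OF sets]
    by (intro set_integral_integral_swap_bounded[OF fin])
      (auto simp: Q_def \<gamma>_def emeasure_lborel_cbox_eq)
  also have "\<dots> = (\<integral>\<zeta>. indicator torus2 \<zeta> *\<^sub>R (\<rho> * fst \<zeta> / (fst \<zeta> - c1)\<^sup>2 * cnj (\<rho> * snd \<zeta> / (snd \<zeta> - c2)\<^sup>2)) \<partial>\<sigma>)"
    unfolding B_def Q_def \<gamma>_def set_integral_cbox_poisson2_times_e2pi[OF c1 c2 \<open>0 < \<rho>\<close>] ..
  moreover have "integral B W = (LINT x:B|lborel. W x)"
    unfolding B_def
    by (intro set_borel_integral_eq_integral(2)[symmetric] borel_integrable_compact[OF compact_cbox,
        folded set_integrable_def] contW[unfolded B_def])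
  moreover have "\<dots> = (LINT x:B|lborel. (\<integral>\<zeta>. Q x \<zeta> \<partial>\<sigma>))"
    by (intro set_lebesgue_integral_cong) (auto simp: B_def W_def Q_def poisson_integral_def simp del: of_real_mult)
  ultimately show ?thesis
    using integral_prod_continuous[OF contW[unfolded B_def]]
    by (simp add: B_def W_def \<gamma>_def cbox_interval mult.assoc)
qed

lemma holomorphic_on_ball_subset_disc:
  "f holomorphic_on ball 0 1 \<Longrightarrow> f holomorphic_on ball c (1 - norm c)"
  by (erule holomorphic_on_subset) (simp add: ball_subset_ball_iff)

text \<open>The radius \<open>\<rho>\<close> is chosen so that both circles avoid the exceptional slices; on the
  resulting torus of circles \<open>h\<close> is holomorphic in each variable, so the mixed Fourier
  coefficient of \<open>Re h\<close> vanishes.\<close>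

lemma integral_mixed_cauchy_kernel_eq_0:
  fixes \<sigma> :: "(complex \<times> complex) measure" and h :: "complex \<times> complex \<Rightarrow> complex"
  assumes sets: "sets \<sigma> = sets borel" and fin: "finite_measure \<sigma>"
    and cont: "continuous_on bidisk h" and "finite E1" "finite E2"
    and hol1: "\<And>y. norm y < 1 \<Longrightarrow> y \<notin> E2 \<Longrightarrow> (\<lambda>x. h (x, y)) holomorphic_on ball 0 1"
    and hol2: "\<And>x. norm x < 1 \<Longrightarrow> x \<notin> E1 \<Longrightarrow> (\<lambda>y. h (x, y)) holomorphic_on ball 0 1"
    and Re_h: "\<And>z. z \<in> bidisk \<Longrightarrow> Re (h z) = poisson_integral \<sigma> z"
    and c: "(c1, c2) \<in> bidisk"
  shows "(\<integral>\<zeta>. indicator torus2 \<zeta> *\<^sub>R (fst \<zeta> / (fst \<zeta> - c1)\<^sup>2 * cnj (snd \<zeta> / (snd \<zeta> - c2)\<^sup>2)) \<partial>\<sigma>) = 0"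
proof -
  define S where "S = (\<lambda>b. norm (b - c1)) ` E1 \<union> (\<lambda>b. norm (b - c2)) ` E2"
  have "infinite ({0<..<min (1 - norm c1) (1 - norm c2)} - S)"
    using c \<open>finite E1\<close> \<open>finite E2\<close>
    by (intro Diff_infinite_finite) (auto simp: S_def bidisk_def infinite_Ioo)
  then obtain \<rho> where "\<rho> \<in> {0<..<min (1 - norm c1) (1 - norm c2)} - S"
    by (metis all_not_in_conv infinite_imp_nonempty)
  then have "0 < \<rho>" and c1: "norm c1 + \<rho> < 1" and c2: "norm c2 + \<rho> < 1" and "\<rho> \<notin> S"
    by auto
  define G where "G s t = h (circlepath c1 \<rho> s, circlepath c2 \<rho> t)" for s t
  have in_bidisk: "(circlepath c1 \<rho> s, circlepath c2 \<rho> t) \<in> bidisk" for s t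
    using norm_circlepath_less_1[OF c1] norm_circlepath_less_1[OF c2] \<open>0 < \<rho>\<close>
    by (simp add: bidisk_def)
  have off1: "circlepath c1 \<rho> s \<notin> E1" for s
    using \<open>\<rho> \<notin> S\<close> norm_circlepath_diff[of \<rho> c1 s] \<open>0 < \<rho>\<close> unfolding S_def
    by (metis UnCI image_eqI less_imp_le)
  have off2: "circlepath c2 \<rho> s \<notin> E2" for s
    using \<open>\<rho> \<notin> S\<close> norm_circlepath_diff[of \<rho> c2 s] \<open>0 < \<rho>\<close> unfolding S_def
    by (metis UnCI image_eqI less_imp_le)
  have cont_G: "continuous_on (cbox (0, 0) (1, 1)) (\<lambda>x. G (fst x) (snd x))"
    unfolding G_def using in_bidisk
    by (intro continuous_on_compose2[OF cont] continuous_intros) auto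
  have "integral {0..1} (\<lambda>s. integral {0..1} (\<lambda>t. of_real (Re (G s t)) * cnj (e2pi s) * e2pi t)) = 0"
  proof (rule double_integral_Re_times_e2pi_eq_0)
    show "continuous_on (cbox (0, 0) (1, 1)) (\<lambda>(s, t). G s t)"
      using cont_G by (simp add: case_prod_unfold)
    show "integral {0..1} (\<lambda>t. G s t * e2pi t) = 0" for s
    proof -
      have "(\<lambda>y. h (circlepath c1 \<rho> s, y)) holomorphic_on ball c2 (1 - norm c2)"
        using hol2[OF norm_circlepath_less_1[OF c1] off1] \<open>0 < \<rho>\<close>
        by (simp add: holomorphic_on_ball_subset_disc)
      then show ?thesis
        using \<open>0 < \<rho>\<close> c2 unfolding G_def
        by (intro integral_unique has_integral_circlepath_times_e2pi) auto
    qed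
    show "integral {0..1} (\<lambda>s. G s t * e2pi s) = 0" for t
    proof -
      have "(\<lambda>x. h (x, circlepath c2 \<rho> t)) holomorphic_on ball c1 (1 - norm c1)"
        using hol1[OF norm_circlepath_less_1[OF c2] off2] \<open>0 < \<rho>\<close>
        by (simp add: holomorphic_on_ball_subset_disc)
      then show ?thesis
        using \<open>0 < \<rho>\<close> c1 unfolding G_def
        by (intro integral_unique has_integral_circlepath_times_e2pi[where g = "\<lambda>x. h (x, _)"]) auto
    qed
  qed
  moreover have "continuous_on (cbox (0, 0) (1, 1))
      (\<lambda>x. poisson_integral \<sigma> (circlepath c1 \<rho> (fst x), circlepath c2 \<rho> (snd x)))"
    using continuous_on_Re[OF cont_G] by (simp add: G_def Re_h in_bidisk)
  ultimately have "(\<integral>\<zeta>. indicator torus2 \<zeta> *\<^sub>R (\<rho> * fst \<zeta> / (fst \<zeta> - c1)\<^sup>2 * cnj (\<rho> * snd \<zeta> / (snd \<zeta> - c2)\<^sup>2)) \<partial>\<sigma>) = 0"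
    using double_integral_poisson_integral_times_e2pi[OF sets fin c1 c2 \<open>0 < \<rho>\<close>]
    by (simp add: G_def Re_h in_bidisk)
  moreover have "indicator torus2 \<zeta> *\<^sub>R (\<rho> * fst \<zeta> / (fst \<zeta> - c1)\<^sup>2 * cnj (\<rho> * snd \<zeta> / (snd \<zeta> - c2)\<^sup>2))
      = of_real (\<rho> * \<rho>) * (indicator torus2 \<zeta> *\<^sub>R (fst \<zeta> / (fst \<zeta> - c1)\<^sup>2 * cnj (snd \<zeta> / (snd \<zeta> - c2)\<^sup>2)))"
    for \<zeta> :: "complex \<times> complex"
    by (simp add: scaleR_conv_of_real mult_ac)
  ultimately show ?thesis
    using \<open>0 < \<rho>\<close> by (simp only: integral_mult_right_zero) simp
qed

section \<open>Atoms\<close>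

definition peak_kernel :: "real \<Rightarrow> complex \<Rightarrow> complex \<Rightarrow> complex" where
  "peak_kernel r b a = of_real ((1 - r)\<^sup>2) * (a / (a - of_real r * b)\<^sup>2)"

lemma norm_peak_kernel_le_1:
  assumes "norm a = 1" "norm b = 1" "0 \<le> r" "r < 1"
  shows "norm (peak_kernel r b a) \<le> 1"
proof -
  have "1 - r \<le> norm (a - of_real r * b)"
    using assms norm_triangle_ineq2[of a "of_real r * b"] by (simp add: norm_mult)
  then have "(1 - r)\<^sup>2 \<le> (norm (a - of_real r * b))\<^sup>2" "0 < norm (a - of_real r * b)"
    using assms by (auto intro: power_mono)
  moreover have "norm (peak_kernel r b a) = (1 - r)\<^sup>2 / (norm (a - of_real r * b))\<^sup>2"
    unfolding peak_kernel_def norm_mult norm_divide norm_power norm_of_real using assms by simp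
  ultimately show ?thesis
    by (simp add: divide_le_eq_1)
qed

lemma peak_kernel_self:
  assumes "norm b = 1" "r < 1"
  shows "peak_kernel r b b = cnj b"
proof -
  define s where "s = complex_of_real (1 - r)"
  have "s \<noteq> 0" "b \<noteq> 0" "b * cnj b = 1"
    using assms complex_norm_square[of b] by (auto simp: s_def)
  have "b - of_real r * b = s * b"
    by (simp add: s_def algebra_simps)
  then have "peak_kernel r b b = s\<^sup>2 * (b / (s * b)\<^sup>2)"
    unfolding peak_kernel_def by (simp add: s_def)
  also have "\<dots> = 1 / b"
    using \<open>s \<noteq> 0\<close> \<open>b \<noteq> 0\<close> by (simp add: field_simps power2_eq_square)
  also have "\<dots> = cnj b"
    using \<open>b * cnj b = 1\<close> \<open>b \<noteq> 0\<close> by (simp add: divide_eq_eq mult.commute)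
  finally show ?thesis .
qed

lemma peak_kernel_tendsto_0:
  assumes "a \<noteq> b" "R \<longlonglongrightarrow> 1"
  shows "(\<lambda>n. peak_kernel (R n) b a) \<longlonglongrightarrow> 0"
proof -
  have "(\<lambda>n. peak_kernel (R n) b a) \<longlonglongrightarrow> of_real ((1 - 1)\<^sup>2) * (a / (a - of_real 1 * b)\<^sup>2)"
    unfolding peak_kernel_def using assms by (intro tendsto_intros) auto
  then show ?thesis
    by simp
qed

lemma borel_measurable_cnj [measurable (raw)]:
  "f \<in> borel_measurable M \<Longrightarrow> (\<lambda>x. cnj (f x)) \<in> borel_measurable M"
  by (erule measurable_compose) (intro borel_measurable_continuous_onI continuous_intros)

definition peak_kernel2 :: "real \<Rightarrow> complex \<times> complex \<Rightarrow> complex \<times> complex \<Rightarrow> complex" where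
  "peak_kernel2 r \<zeta> \<xi> = peak_kernel r (fst \<zeta>) (fst \<xi>) * cnj (peak_kernel r (snd \<zeta>) (snd \<xi>))"

lemma norm_peak_kernel2_le_1:
  assumes "\<zeta> \<in> torus2" "\<xi> \<in> torus2" "0 \<le> r" "r < 1"
  shows "norm (peak_kernel2 r \<zeta> \<xi>) \<le> 1"
  using assms norm_peak_kernel_le_1[of "fst \<xi>" "fst \<zeta>" r] norm_peak_kernel_le_1[of "snd \<xi>" "snd \<zeta>" r]
  by (auto simp: peak_kernel2_def torus2_def norm_mult intro: mult_le_one)

lemma peak_kernel2_self: "\<zeta> \<in> torus2 \<Longrightarrow> r < 1 \<Longrightarrow> peak_kernel2 r \<zeta> \<zeta> = cnj (fst \<zeta>) * snd \<zeta>"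
  by (simp add: peak_kernel2_def peak_kernel_self torus2_def)

lemma peak_kernel2_tendsto_0:
  assumes "\<zeta> \<in> torus2" "\<xi> \<in> torus2" "\<xi> \<noteq> \<zeta>" and R: "R \<longlonglongrightarrow> 1" "\<And>n. 0 \<le> R n" "\<And>n. R n < 1"
  shows "(\<lambda>n. peak_kernel2 (R n) \<zeta> \<xi>) \<longlonglongrightarrow> 0"
proof -
  have bounded: "norm (peak_kernel (R n) (fst \<zeta>) (fst \<xi>)) \<le> 1" "norm (peak_kernel (R n) (snd \<zeta>) (snd \<xi>)) \<le> 1"
    for n
    using assms norm_peak_kernel_le_1 by (auto simp: torus2_def)
  have "fst \<xi> \<noteq> fst \<zeta> \<or> snd \<xi> \<noteq> snd \<zeta>"
    using \<open>\<xi> \<noteq> \<zeta>\<close> by (auto simp: prod_eq_iff)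
  then show ?thesis
  proof
    assume ne: "fst \<xi> \<noteq> fst \<zeta>"
    show ?thesis
      by (rule Lim_null_comparison[OF always_eventually tendsto_norm_zero[OF peak_kernel_tendsto_0[OF ne R(1)]]])
        (use bounded in \<open>auto simp: peak_kernel2_def norm_mult intro: mult_right_le_one_le\<close>)
  next
    assume ne: "snd \<xi> \<noteq> snd \<zeta>"
    show ?thesis
      by (rule Lim_null_comparison[OF always_eventually tendsto_norm_zero[OF peak_kernel_tendsto_0[OF ne R(1)]]])
        (use bounded in \<open>auto simp: peak_kernel2_def norm_mult intro: mult_left_le_one_le\<close>)
  qed
qed

lemma emeasure_singleton_eq_0_if_mixed_cauchy_integrals_vanish:
  fixes \<sigma> :: "(complex \<times> complex) measure"
  assumes sets: "sets \<sigma> = sets borel" and "finite_measure \<sigma>" and \<zeta>: "\<zeta> \<in> torus2"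
    and vanish: "\<And>r. 0 < r \<Longrightarrow> r < 1 \<Longrightarrow>
      (\<integral>\<xi>. indicator torus2 \<xi> *\<^sub>R
        (fst \<xi> / (fst \<xi> - of_real r * fst \<zeta>)\<^sup>2 * cnj (snd \<xi> / (snd \<xi> - of_real r * snd \<zeta>)\<^sup>2)) \<partial>\<sigma>)
        = 0"
  shows "emeasure \<sigma> {\<zeta>} = 0"
proof -
  interpret finite_measure \<sigma> by fact
  define R where "R n = 1 - 1 / real (n + 2)" for n
  have R: "0 < R n" "R n < 1" for n
    by (auto simp: R_def field_simps)
  have "R \<longlonglongrightarrow> 1 - 0"
    unfolding R_def using LIMSEQ_ignore_initial_segment[OF lim_const_over_n[of 1], of 2]
    by (intro tendsto_diff tendsto_const) simp
  then have "R \<longlonglongrightarrow> 1"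
    by simp
  define K where "K n \<xi> = indicator torus2 \<xi> *\<^sub>R peak_kernel2 (R n) \<zeta> \<xi>" for n \<xi>
  define L where "L \<xi> = indicator {\<zeta>} \<xi> *\<^sub>R (cnj (fst \<zeta>) * snd \<zeta>)" for \<xi> :: "complex \<times> complex"
  have "(\<lambda>n. K n \<xi>) \<longlonglongrightarrow> L \<xi>" for \<xi>
    using \<zeta> peak_kernel2_self[OF \<zeta> R(2)] peak_kernel2_tendsto_0[OF \<zeta> _ _ \<open>R \<longlonglongrightarrow> 1\<close>] R
    by (cases "\<xi> = \<zeta>"; cases "\<xi> \<in> torus2") (auto simp: K_def L_def less_imp_le)
  moreover have "K n \<in> borel_measurable \<sigma>" for n
    unfolding K_def peak_kernel2_def peak_kernel_def measurable_cong_sets[OF sets refl]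
    by (intro borel_measurable_scaleR borel_measurable_times borel_measurable_divide
        borel_measurable_power borel_measurable_diff borel_measurable_const borel_measurable_cnj
        measurable_compose[OF _ borel_measurable_indicator[OF torus2_sets]]
        borel_measurable_continuous_onI continuous_intros)
  moreover have "norm (K n \<xi>) \<le> 1" for n \<xi>
    using norm_peak_kernel2_le_1[OF \<zeta> _ less_imp_le[OF R(1)] R(2)] by (simp add: K_def indicator_def)
  moreover have "L \<in> borel_measurable \<sigma>"
    unfolding L_def measurable_cong_sets[OF sets refl]
    by (intro borel_measurable_scaleR borel_measurable_indicator borel_measurable_const) simp
  ultimately have "(\<lambda>n. integral\<^sup>L \<sigma> (K n)) \<longlonglongrightarrow> integral\<^sup>L \<sigma> L"
    by (intro integral_dominated_convergence[where w = "\<lambda>_. 1"]) auto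
  moreover have "integral\<^sup>L \<sigma> (K n) = 0" for n
  proof -
    have "K n = (\<lambda>\<xi>. of_real ((1 - R n)\<^sup>2 * (1 - R n)\<^sup>2) * (indicator torus2 \<xi> *\<^sub>R
        (fst \<xi> / (fst \<xi> - of_real (R n) * fst \<zeta>)\<^sup>2 * cnj (snd \<xi> / (snd \<xi> - of_real (R n) * snd \<zeta>)\<^sup>2))))"
      by (rule ext) (simp add: K_def peak_kernel2_def peak_kernel_def scaleR_conv_of_real mult_ac)
    then show ?thesis
      by (simp only: integral_mult_right_zero vanish[OF R] mult_zero_right)
  qed
  ultimately have "integral\<^sup>L \<sigma> L = 0"
    by (simp add: LIMSEQ_const_iff)
  moreover have "{\<zeta>} \<in> sets \<sigma>"
    using sets by simp
  then have "integral\<^sup>L \<sigma> L = measure \<sigma> {\<zeta>} *\<^sub>R (cnj (fst \<zeta>) * snd \<zeta>)"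
    unfolding L_def using sets_eq_imp_space_eq[OF sets]
    by (subst integral_scaleR_left) (auto simp: emeasure_finite less_top[symmetric])
  moreover have "cnj (fst \<zeta>) * snd \<zeta> \<noteq> 0"
    using \<zeta> by (auto simp: torus2_def)
  ultimately show ?thesis
    by (simp add: emeasure_eq_measure)
qed

lemma emeasure_singleton_eq_0_if_Re_separately_holomorphic:
  fixes \<sigma> :: "(complex \<times> complex) measure" and h :: "complex \<times> complex \<Rightarrow> complex"
  assumes "sets \<sigma> = sets borel" "finite_measure \<sigma>"
    and "continuous_on bidisk h" "finite E1" "finite E2"
    and "\<And>y. norm y < 1 \<Longrightarrow> y \<notin> E2 \<Longrightarrow> (\<lambda>x. h (x, y)) holomorphic_on ball 0 1"
    and "\<And>x. norm x < 1 \<Longrightarrow> x \<notin> E1 \<Longrightarrow> (\<lambda>y. h (x, y)) holomorphic_on ball 0 1"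
    and "\<And>z. z \<in> bidisk \<Longrightarrow> Re (h z) = poisson_integral \<sigma> z"
    and \<zeta>: "\<zeta> \<in> torus2"
  shows "emeasure \<sigma> {\<zeta>} = 0"
proof (rule emeasure_singleton_eq_0_if_mixed_cauchy_integrals_vanish[OF assms(1,2) \<zeta>])
  fix r :: real
  assume "0 < r" "r < 1"
  then have c: "(of_real r * fst \<zeta>, of_real r * snd \<zeta>) \<in> bidisk"
    using \<zeta> by (simp add: bidisk_def torus2_def norm_mult)
  show "(\<integral>\<xi>. indicator torus2 \<xi> *\<^sub>R (fst \<xi> / (fst \<xi> - of_real r * fst \<zeta>)\<^sup>2
      * cnj (snd \<xi> / (snd \<xi> - of_real r * snd \<zeta>)\<^sup>2)) \<partial>\<sigma>) = 0"
    using integral_mixed_cauchy_kernel_eq_0[OF assms(1-8) c] by simp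
qed

section \<open>Clark measures\<close>

lemma emeasure_singleton_mult_le_nn_integral:
  assumes "{x} \<in> sets M"
  shows "emeasure M {x} * f x \<le> (\<integral>\<^sup>+ y. f y \<partial>M)"
proof -
  have "emeasure M {x} * f x = (\<integral>\<^sup>+ y. f x * indicator {x} y \<partial>M)"
    using assms by (simp add: nn_integral_cmult_indicator mult.commute)
  also have "\<dots> \<le> (\<integral>\<^sup>+ y. f y \<partial>M)"
    by (intro nn_integral_mono) (simp add: indicator_def)
  finally show ?thesis .
qed

lemma poisson_kernel_pos_if_clark_atom:
  assumes clark: "is_clark_measure \<phi> \<alpha> \<sigma>" and \<zeta>: "\<zeta> \<in> torus2" and atom: "emeasure \<sigma> {\<zeta>} \<noteq> 0"
    and z: "z \<in> bidisk"
  shows "0 < poisson_kernel (\<phi> z) \<alpha>"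
proof -
  have "0 < poisson2 z \<zeta>"
    using z \<zeta> by (auto simp: poisson2_eq_poisson_kernel bidisk_def torus2_def intro!: mult_pos_pos poisson_kernel_pos)
  then have "0 < emeasure \<sigma> {\<zeta>} * ennreal (poisson2 z \<zeta>)"
    using atom by (simp add: zero_less_iff_neq_zero)
  also have "\<dots> \<le> (\<integral>\<^sup>+ \<xi>. ennreal (poisson2 z \<xi>) \<partial>\<sigma>)"
    using clark by (intro emeasure_singleton_mult_le_nn_integral) (simp add: is_clark_measure_def)
  also have "\<dots> = ennreal (poisson_kernel (\<phi> z) \<alpha>)"
    using clark z by (simp add: is_clark_measure_def poisson_kernel_def)
  finally show ?thesis
    by (simp add: ennreal_less_zero_iff)
qed

lemma Re_cayley_eq_poisson_integral_if_clark:
  assumes clark: "is_clark_measure \<phi> \<alpha> \<sigma>" and "norm \<alpha> = 1" and z: "z \<in> bidisk"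
    and pos: "0 < poisson_kernel (\<phi> z) \<alpha>"
  shows "Re ((\<alpha> + \<phi> z) / (\<alpha> - \<phi> z)) = poisson_integral \<sigma> z"
proof -
  have "\<phi> z \<noteq> \<alpha>"
    using pos by (auto simp: poisson_kernel_def)
  have "sets \<sigma> = sets borel" "finite_measure \<sigma>" "emeasure \<sigma> (UNIV - torus2) = 0"
    and "ennreal (poisson_kernel (\<phi> z) \<alpha>) = (\<integral>\<^sup>+ \<zeta>. ennreal (poisson2 z \<zeta>) \<partial>\<sigma>)"
    using clark z by (auto simp: is_clark_measure_def poisson_kernel_def)
  then have "ennreal (poisson_kernel (\<phi> z) \<alpha>) = ennreal (poisson_integral \<sigma> z)"
    using nn_integral_poisson2_eq_poisson_integral[OF _ _ _ z] by simp
  then show ?thesis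
    using pos poisson_integral_nonneg[OF z] poisson_kernel_eq_Re[OF \<open>norm \<alpha> = 1\<close> \<open>\<phi> z \<noteq> \<alpha>\<close>] by simp
qed

lemma clark_measure_no_atoms_if_separately_holomorphic:
  assumes clark: "is_clark_measure \<phi> \<alpha> \<sigma>" and "norm \<alpha> = 1" and cont: "continuous_on bidisk \<phi>"
    and E: "finite E1" "finite E2"
    and hol1: "\<And>y. norm y < 1 \<Longrightarrow> y \<notin> E2 \<Longrightarrow> (\<lambda>x. \<phi> (x, y)) holomorphic_on ball 0 1"
    and hol2: "\<And>x. norm x < 1 \<Longrightarrow> x \<notin> E1 \<Longrightarrow> (\<lambda>y. \<phi> (x, y)) holomorphic_on ball 0 1"
    and \<zeta>: "\<zeta> \<in> torus2"
  shows "emeasure \<sigma> {\<zeta>} = 0"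
proof (rule ccontr)
  assume atom: "emeasure \<sigma> {\<zeta>} \<noteq> 0"
  note pos = poisson_kernel_pos_if_clark_atom[OF clark \<zeta> atom]
  have ne: "\<alpha> - \<phi> (x, y) \<noteq> 0" if "norm x < 1" "norm y < 1" for x y
    using pos[of "(x, y)"] that by (auto simp: poisson_kernel_def bidisk_def)
  define h where "h z = (\<alpha> + \<phi> z) / (\<alpha> - \<phi> z)" for z
  have "sets \<sigma> = sets borel" "finite_measure \<sigma>"
    using clark by (auto simp: is_clark_measure_def)
  then have "emeasure \<sigma> {\<zeta>} = 0"
  proof (rule emeasure_singleton_eq_0_if_Re_separately_holomorphic[OF _ _ _ E _ _ _ \<zeta>])
    show "continuous_on bidisk h"
      unfolding h_def using ne by (intro continuous_intros cont) (auto simp: bidisk_def)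
    show "(\<lambda>x. h (x, y)) holomorphic_on ball 0 1" if "norm y < 1" "y \<notin> E2" for y
      unfolding h_def using hol1[OF that] ne \<open>norm y < 1\<close> by (intro holomorphic_intros) auto
    show "(\<lambda>y. h (x, y)) holomorphic_on ball 0 1" if "norm x < 1" "x \<notin> E1" for x
      unfolding h_def using hol2[OF that] ne \<open>norm x < 1\<close> by (intro holomorphic_intros) auto
    show "Re (h z) = poisson_integral \<sigma> z" if "z \<in> bidisk" for z
      unfolding h_def using Re_cayley_eq_poisson_integral_if_clark[OF clark \<open>norm \<alpha> = 1\<close> that pos[OF that]] .
  qed
  with atom show False
    by contradiction
qed

section \<open>Rational functions of two variables\<close>

lemma bipoly_swap:
  assumes "bipoly q"
  shows "bipoly (\<lambda>z. q (snd z, fst z))"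
proof -
  obtain n a where a: "\<And>z. q z = (\<Sum>i\<le>n. \<Sum>j\<le>n. a i j * fst z ^ i * snd z ^ j)"
    using assms unfolding bipoly_def by blast
  have "q (snd z, fst z) = (\<Sum>i\<le>n. \<Sum>j\<le>n. a j i * fst z ^ i * snd z ^ j)" for z
    unfolding a by (subst sum.swap) (simp add: mult_ac)
  then show ?thesis
    unfolding bipoly_def by (intro exI[of _ n] exI[of _ "\<lambda>i j. a j i"]) simp
qed

lemma bipoly_obtains_poly_coeffs:
  assumes "bipoly q"
  obtains n C where "\<And>x y. q (x, y) = poly (\<Sum>i\<le>n. monom (poly (C i) y) i) x"
proof -
  obtain n a where a: "\<And>z. q z = (\<Sum>i\<le>n. \<Sum>j\<le>n. a i j * fst z ^ i * snd z ^ j)"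
    using assms unfolding bipoly_def by blast
  define C where "C i = (\<Sum>j\<le>n. monom (a i j) j)" for i
  have "q (x, y) = poly (\<Sum>i\<le>n. monom (poly (C i) y) i) x" for x y
    by (simp add: a C_def poly_sum poly_monom sum_distrib_left sum_distrib_right mult_ac)
  then show ?thesis
    by (rule that)
qed

lemma holomorphic_on_bipoly_fst:
  assumes "bipoly q"
  shows "(\<lambda>x. q (x, y)) holomorphic_on S"
proof -
  obtain n a where "\<And>z. q z = (\<Sum>i\<le>n. \<Sum>j\<le>n. a i j * fst z ^ i * snd z ^ j)"
    using assms unfolding bipoly_def by blast
  then show ?thesis
    by (simp add: holomorphic_on_sum holomorphic_intros)
qed

lemma finite_bipoly_fst_zeros:
  assumes "bipoly q" "\<not> (\<forall>x. q (x, y) = 0)"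
  shows "finite {x. q (x, y) = 0}"
proof -
  obtain n C where C: "\<And>x y. q (x, y) = poly (\<Sum>i\<le>n. monom (poly (C i) y) i) x"
    by (metis assms(1) bipoly_obtains_poly_coeffs)
  then have "(\<Sum>i\<le>n. monom (poly (C i) y) i) \<noteq> 0"
    using assms(2) by auto
  then show ?thesis
    using poly_roots_finite by (simp add: C)
qed

lemma finite_bipoly_vanishing_fst_slices:
  assumes "bipoly q" "\<exists>z. q z \<noteq> 0"
  shows "finite {y. \<forall>x. q (x, y) = 0}"
proof -
  obtain n C where C: "\<And>x y. q (x, y) = poly (\<Sum>i\<le>n. monom (poly (C i) y) i) x"
    by (metis assms(1) bipoly_obtains_poly_coeffs)
  have coeff: "coeff (\<Sum>i\<le>n. monom (poly (C i) y) i) i = poly (C i) y" if "i \<le> n" for i y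
    using that by (simp add: coeff_sum coeff_monom)
  obtain x0 y0 where "q (x0, y0) \<noteq> 0"
    using assms(2) by auto
  then have nonzero: "(\<Sum>i\<le>n. monom (poly (C i) y0) i) \<noteq> 0"
    by (auto simp: C)
  have "\<exists>i\<le>n. poly (C i) y0 \<noteq> 0"
  proof (rule ccontr)
    assume "\<not> (\<exists>i\<le>n. poly (C i) y0 \<noteq> 0)"
    then have "(\<Sum>i\<le>n. monom (poly (C i) y0) i) = 0"
      by (intro sum.neutral) auto
    with nonzero show False
      by contradiction
  qed
  then obtain i0 where "i0 \<le> n" "poly (C i0) y0 \<noteq> 0"
    by blast
  then have "C i0 \<noteq> 0"
    by auto
  have "{y. \<forall>x. q (x, y) = 0} \<subseteq> {y. poly (C i0) y = 0}"
  proof safe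
    fix y
    assume "\<forall>x. q (x, y) = 0"
    then have "(\<Sum>i\<le>n. monom (poly (C i) y) i) = 0"
      using poly_all_0_iff_0 by (auto simp: C)
    then show "poly (C i0) y = 0"
      using coeff[OF \<open>i0 \<le> n\<close>, of y] by simp
  qed
  then show ?thesis
    using poly_roots_finite[OF \<open>C i0 \<noteq> 0\<close>] finite_subset by blast
qed

lemma holomorphic_on_fst_slice_of_continuous_quotient:
  assumes "bipoly p" "bipoly q" and quot: "\<forall>z\<in>bidisk. q z \<noteq> 0 \<longrightarrow> \<phi> z = p z / q z"
    and cont: "continuous_on bidisk \<phi>" and "norm y < 1" and "\<not> (\<forall>x. q (x, y) = 0)"
  shows "(\<lambda>x. \<phi> (x, y)) holomorphic_on ball 0 1"
proof -
  define Z where "Z = {x. q (x, y) = 0}"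
  have in_bidisk: "(x, y) \<in> bidisk" if "x \<in> ball 0 1" for x
    using that \<open>norm y < 1\<close> by (simp add: bidisk_def)
  have "continuous_on (ball 0 1) (\<lambda>x. \<phi> (x, y))"
    using in_bidisk by (intro continuous_on_compose2[OF cont] continuous_intros) auto
  moreover have "(\<lambda>x. p (x, y) / q (x, y)) holomorphic_on ball 0 1 - Z"
    using holomorphic_on_bipoly_fst[OF \<open>bipoly p\<close>] holomorphic_on_bipoly_fst[OF \<open>bipoly q\<close>]
    by (intro holomorphic_on_divide) (auto simp: Z_def)
  then have "(\<lambda>x. \<phi> (x, y)) holomorphic_on ball 0 1 - Z"
    by (rule holomorphic_transform) (use quot in_bidisk in \<open>auto simp: Z_def\<close>)
  moreover have "finite Z"
    unfolding Z_def using assms(2,6) by (rule finite_bipoly_fst_zeros)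
  ultimately show ?thesis
    by (rule no_isolated_singularity[OF _ _ open_ball])
qed

lemma rational_separately_holomorphic_off_finite:
  assumes p: "bipoly p" and q: "bipoly q" and "\<exists>z\<in>bidisk. q z \<noteq> 0"
    and quot: "\<forall>z\<in>bidisk. q z \<noteq> 0 \<longrightarrow> \<phi> z = p z / q z" and cont: "continuous_on bidisk \<phi>"
  obtains E1 E2 where "finite E1" "finite E2"
    "\<And>y. norm y < 1 \<Longrightarrow> y \<notin> E2 \<Longrightarrow> (\<lambda>x. \<phi> (x, y)) holomorphic_on ball 0 1"
    "\<And>x. norm x < 1 \<Longrightarrow> x \<notin> E1 \<Longrightarrow> (\<lambda>y. \<phi> (x, y)) holomorphic_on ball 0 1"
proof
  define swap :: "complex \<times> complex \<Rightarrow> complex \<times> complex" where "swap z = (snd z, fst z)" for z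
  have swap_bidisk: "swap z \<in> bidisk \<longleftrightarrow> z \<in> bidisk" for z
    by (auto simp: swap_def bidisk_def)
  have "\<exists>z. q z \<noteq> 0" "\<exists>z. (q \<circ> swap) z \<noteq> 0"
    using assms(3) by (auto simp: swap_def intro: exI[of _ "swap _"])
  then show "finite {x. \<forall>y. q (x, y) = 0}" "finite {y. \<forall>x. q (x, y) = 0}"
    using finite_bipoly_vanishing_fst_slices[OF bipoly_swap[OF q]] finite_bipoly_vanishing_fst_slices[OF q]
    by (auto simp: swap_def o_def)
  show "(\<lambda>x. \<phi> (x, y)) holomorphic_on ball 0 1" if "norm y < 1" "y \<notin> {y. \<forall>x. q (x, y) = 0}" for y
    using that by (intro holomorphic_on_fst_slice_of_continuous_quotient[OF p q quot cont]) auto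
  have "continuous_on bidisk (\<phi> \<circ> swap)"
    using swap_bidisk by (intro continuous_on_compose continuous_on_subset[OF cont])
      (auto simp: swap_def intro!: continuous_intros)
  moreover have "\<forall>z\<in>bidisk. (q \<circ> swap) z \<noteq> 0 \<longrightarrow> (\<phi> \<circ> swap) z = (p \<circ> swap) z / (q \<circ> swap) z"
    using quot swap_bidisk by simp
  ultimately show "(\<lambda>y. \<phi> (x, y)) holomorphic_on ball 0 1" if "norm x < 1" "x \<notin> {x. \<forall>y. q (x, y) = 0}" for x
    using that holomorphic_on_fst_slice_of_continuous_quotient[OF bipoly_swap[OF p] bipoly_swap[OF q],
        of "\<phi> \<circ> swap" x]
    by (auto simp: swap_def o_def)
qed

theorem theorem2p1:
  fixes \<phi> :: "complex \<times> complex \<Rightarrow> complex" and \<alpha> :: complex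
    and \<sigma> :: "(complex \<times> complex) measure"
  assumes "rational_inner \<phi>"
    and "\<not> (\<exists>c. \<forall>z\<in>bidisk. \<phi> z = c)"
    and "norm \<alpha> = 1"
    and "is_clark_measure \<phi> \<alpha> \<sigma>"
  shows "\<forall>\<zeta>\<in>torus2. emeasure \<sigma> {\<zeta>} = 0"
proof
  fix \<zeta>
  assume "\<zeta> \<in> torus2"
  obtain p q where pq: "bipoly p" "bipoly q" "\<exists>z\<in>bidisk. q z \<noteq> 0"
    "\<forall>z\<in>bidisk. q z \<noteq> 0 \<longrightarrow> \<phi> z = p z / q z" and cont: "continuous_on bidisk \<phi>"
    using assms(1) unfolding rational_inner_def by blast
  obtain E1 E2 where "finite E1" "finite E2"
    and "\<And>y. norm y < 1 \<Longrightarrow> y \<notin> E2 \<Longrightarrow> (\<lambda>x. \<phi> (x, y)) holomorphic_on ball 0 1"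
    and "\<And>x. norm x < 1 \<Longrightarrow> x \<notin> E1 \<Longrightarrow> (\<lambda>y. \<phi> (x, y)) holomorphic_on ball 0 1"
    using rational_separately_holomorphic_off_finite[OF pq cont] by blast
  then show "emeasure \<sigma> {\<zeta>} = 0"
    using clark_measure_no_atoms_if_separately_holomorphic[OF assms(4,3) cont] \<open>\<zeta> \<in> torus2\<close> by blast
qed

end
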